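(* Let $f:[1,\infty)\to\mathbb R$ be convex and strictly increasing with $f(1)=0$ (e.g. $f(x)=x\ln x$ or $f(x)=x-1$), and let $E_f(\sigma)=f(\|\sigma\|_\gamma)$ for density operators $\sigma$ on $\mathcal H_1\otimes\mathcal H_2$ with $\mathcal H_1,\mathcal H_2$ finite-dimensional. Then $E_f(\sigma)=0$ if and only if $\sigma$ is separable.
   Context: A density operator is a positive trace class operator with trace one; a density operator $\varrho$ on $\mathcal H_1\otimes\mathcal H_2$ is separable if $\varrho=\sum_i\omega_i\rho^{(1)}_i\otimes\rho^{(2)}_i$ with $\omega_i>0$ and density operators $\rho^{(1)}_i,\rho^{(2)}_i$ on $\mathcal H_1,\mathcal H_2$. $\|x\|_1$ is the trace norm. The greatest cross norm is $\|t\|_\gamma:=\inf\{\sum_{i=1}^n\|u_i\|_1\|v_i\|_1 : t=\sum_{i=1}^n u_i\otimes v_i\}$ over finite decompositions into elementary tensors of operators on $\mathcal H_1$ and $\mathcal H_2$. For density operators $\|\sigma\|_\gamma\ge1$. *)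

theory Defs
  imports "HOL-Analysis.Analysis"
begin

text \<open>Finite-dimensional Hilbert spaces H = C^'n, operators = complex matrices indexed by a
  finite type. H1 (x) H2 is C^('a \<times> 'b).\<close>

definition adjoint_mat :: "complex^'n^'n \<Rightarrow> complex^'n^'n" where
  "adjoint_mat A = (\<chi> i j. cnj (A $ j $ i))"

definition positive_op :: "complex^'n^'n \<Rightarrow> bool" where
  "positive_op A \<longleftrightarrow> (\<forall>v :: complex^'n.
      Im ((\<Sum>i\<in>UNIV. cnj (v $ i) * (A *v v) $ i)) = 0 \<and>
      Re ((\<Sum>i\<in>UNIV. cnj (v $ i) * (A *v v) $ i)) \<ge> 0)"

definition density_op :: "complex^'n^'n \<Rightarrow> bool" where
  "density_op A \<longleftrightarrow> positive_op A \<and> trace A = 1"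

definition abs_op :: "complex^'n^'n \<Rightarrow> complex^'n^'n" where
  "abs_op A = (THE B. positive_op B \<and> B ** B = adjoint_mat A ** A)"

definition trace_norm :: "complex^'n^'n \<Rightarrow> real" where
  "trace_norm A = Re (trace (abs_op A))"

definition tensor_op :: "complex^'a^'a \<Rightarrow> complex^'b^'b \<Rightarrow> complex^('a \<times> 'b)^('a \<times> 'b)" where
  "tensor_op u v = (\<chi> r c. u $ fst r $ fst c * v $ snd r $ snd c)"

definition separable :: "complex^('a::finite \<times> 'b::finite)^('a \<times> 'b) \<Rightarrow> bool" where
  "separable \<rho> \<longleftrightarrow> (\<exists>(n::nat) (\<omega>::nat \<Rightarrow> real) (\<rho>1::nat \<Rightarrow> complex^'a^'a) (\<rho>2::nat \<Rightarrow> complex^'b^'b).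
      (\<forall>i<n. \<omega> i > 0 \<and> density_op (\<rho>1 i) \<and> density_op (\<rho>2 i)) \<and>
      \<rho> = (\<Sum>i<n. \<omega> i *\<^sub>R tensor_op (\<rho>1 i) (\<rho>2 i)))"

definition gamma_norm :: "complex^('a::finite \<times> 'b::finite)^('a \<times> 'b) \<Rightarrow> real" where
  "gamma_norm t = Inf {(\<Sum>i<n. trace_norm (u i) * trace_norm (v i)) | (n::nat) (u::nat \<Rightarrow> complex^'a^'a) (v::nat \<Rightarrow> complex^'b^'b).
      t = (\<Sum>i<n. tensor_op (u i) (v i))}"

end

theory Submission
  imports Defs
begin

text \<open>
  The trace norm dominates the modulus of the trace, so every decomposition of a density
  operator \<sigma> into elementary tensors costs at least |tr \<sigma>| = 1; a separable \<sigma> attains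
  this bound because density operators have trace norm 1. For the converse, let B be the
  set of matrices A with Re tr(X A) \<le> 1 for every contraction X. It contains every matrix
  divided by its trace norm, it is compact, and its elements of trace 1 are positive. If
  the cross norm of \<sigma> is 1, then \<sigma> lies in the closed convex hull of the products u \<otimes> v
  with u, v \<in> B, i.e. it is a convex combination of such products. Their traces tr u tr v
  lie in the closed unit disc and average to 1, hence all equal 1, and after rescaling by
  phases both factors are density operators. The trace norm itself is made accessible
  through a spectral decomposition of A* A, obtained by maximising Rayleigh quotients.
  Finally f vanishes at the cross norm, which is at least 1, iff the cross norm is 1,
  since f is strictly increasing with f 1 = 0.
\<close>

definition cinner :: "complex^'n \<Rightarrow> complex^'n \<Rightarrow> complex" where
  "cinner v w = (\<Sum>i\<in>UNIV. cnj (v $ i) * w $ i)"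

lemma cinner_zero_right [simp]: "cinner v 0 = 0"
  by (simp add: cinner_def)

lemma cinner_add_left: "cinner (u + v) w = cinner u w + cinner v w"
  by (simp add: cinner_def distrib_right sum.distrib)

lemma cinner_add_right: "cinner u (v + w) = cinner u v + cinner u w"
  by (simp add: cinner_def distrib_left sum.distrib)

lemma cinner_diff_right: "cinner u (v - w) = cinner u v - cinner u w"
  by (simp add: cinner_def right_diff_distrib sum_subtractf)

lemma cinner_scale_left: "cinner (c *s v) w = cnj c * cinner v w"
  by (simp add: cinner_def sum_distrib_left algebra_simps)

lemma cinner_scale_right: "cinner v (c *s w) = c * cinner v w"
  by (simp add: cinner_def sum_distrib_left algebra_simps)

lemma cinner_sum_right: "cinner v (\<Sum>j\<in>J. f j) = (\<Sum>j\<in>J. cinner v (f j))"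
  by (induction J rule: infinite_finite_induct) (simp_all add: cinner_add_right)

lemma cinner_commute: "cnj (cinner v w) = cinner w v"
  by (simp add: cinner_def mult.commute)

lemma cnj_mult_self: "cnj z * z = of_real ((norm z)\<^sup>2)"
  by (metis complex_norm_square mult.commute of_real_power)

lemma cinner_self: "cinner v v = of_real ((norm v)\<^sup>2)"
proof -
  have "cinner v v = (\<Sum>i\<in>UNIV. of_real ((norm (v $ i))\<^sup>2))"
    unfolding cinner_def by (intro sum.cong refl) (rule cnj_mult_self)
  also have "\<dots> = of_real ((norm v)\<^sup>2)"
    by (simp add: norm_vec_def L2_set_def sum_nonneg)
  finally show ?thesis .
qed

lemma cinner_self_eq_1_iff: "cinner v v = 1 \<longleftrightarrow> norm v = 1"
proof -
  have "cinner v v = 1 \<longleftrightarrow> (norm v)\<^sup>2 = 1" by (simp only: cinner_self of_real_eq_1_iff)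
  then show ?thesis using norm_ge_zero[of v] by (auto simp: power2_eq_1_iff)
qed

lemma norm_cinner_le: "norm (cinner v w) \<le> norm v * norm w"
proof -
  have "norm (cinner v w) \<le> (\<Sum>i\<in>UNIV. \<bar>norm (v $ i)\<bar> * \<bar>norm (w $ i)\<bar>)"
    unfolding cinner_def by (rule order_trans[OF norm_sum]) (simp add: norm_mult)
  also have "\<dots> \<le> L2_set (\<lambda>i. norm (v $ i)) UNIV * L2_set (\<lambda>i. norm (w $ i)) UNIV"
    by (rule L2_set_mult_ineq)
  finally show ?thesis by (simp add: norm_vec_def)
qed

lemma norm_scale_vec: "norm (c *s (v::complex^'n)) = norm c * norm v"
  unfolding norm_vec_def L2_set_def
  by (simp add: norm_mult power_mult_distrib sum_distrib_left[symmetric] real_sqrt_mult)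

lemma norm_add_orthogonal:
  assumes "cinner x w = 0"
  shows "(norm (w + a *s x))\<^sup>2 = (norm w)\<^sup>2 + (norm a)\<^sup>2 * (norm x)\<^sup>2"
proof -
  have "cinner w x = 0" using assms cinner_commute[of x w] by simp
  then have "cinner (w + a *s x) (w + a *s x) = cinner w w + cnj a * a * cinner x x"
    using assms by (simp add: cinner_add_left cinner_add_right cinner_scale_left cinner_scale_right)
  also have "\<dots> = of_real ((norm w)\<^sup>2 + (norm a)\<^sup>2 * (norm x)\<^sup>2)"
    by (simp add: cinner_self cnj_mult_self)
  finally have "of_real ((norm (w + a *s x))\<^sup>2)
      = (of_real ((norm w)\<^sup>2 + (norm a)\<^sup>2 * (norm x)\<^sup>2) :: complex)"
    by (simp only: cinner_self)
  then show ?thesis by (simp only: of_real_eq_iff)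
qed

lemma cinner_axis_left: "cinner (axis i 1) v = v $ i"
proof -
  have "cinner (axis i 1) v = (\<Sum>k\<in>UNIV. if k = i then v $ k else 0)"
    unfolding cinner_def by (intro sum.cong refl) (auto simp: axis_def)
  then show ?thesis by simp
qed

lemma matrix_vector_mult_axis: "((A::complex^'n^'m) *v axis j 1) $ i = A $ i $ j"
proof -
  have "(A *v axis j 1) $ i = (\<Sum>k\<in>UNIV. if k = j then A $ i $ k else 0)"
    unfolding matrix_vector_mult_def by (simp add: axis_def if_distrib cong: if_cong)
  then show ?thesis by simp
qed

lemma norm_axis_complex: "norm (axis i (1::complex) :: complex^'n) = 1"
  unfolding cinner_self_eq_1_iff[symmetric] cinner_axis_left by (simp add: axis_def)

lemma unit_vector_decomposition: "\<exists>u::complex^'n. norm u = 1 \<and> v = of_real (norm v) *s u"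
proof (cases "v = 0")
  case True
  then show ?thesis by (intro exI[of _ "axis undefined 1"]) (simp add: norm_axis_complex)
next
  case False
  then show ?thesis
    by (intro exI[of _ "of_real (1 / norm v) *s v"])
       (simp add: norm_scale_vec norm_divide vector_smult_assoc)
qed

lemma cinner_adjoint_left: "cinner (adjoint_mat A *v v) w = cinner v (A *v w)"
proof -
  have "cinner v (A *v w) = (\<Sum>i\<in>UNIV. \<Sum>j\<in>UNIV. cnj (v $ i) * A $ i $ j * w $ j)"
    unfolding cinner_def matrix_vector_mult_def by (simp add: sum_distrib_left mult.assoc)
  also have "\<dots> = (\<Sum>j\<in>UNIV. \<Sum>i\<in>UNIV. cnj (v $ i) * A $ i $ j * w $ j)"
    by (rule sum.swap)
  also have "\<dots> = cinner (adjoint_mat A *v v) w"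
    unfolding cinner_def matrix_vector_mult_def adjoint_mat_def
    by (simp add: sum_distrib_right cnj_sum mult.commute) (simp add: sum_distrib_left)
  finally show ?thesis ..
qed

lemma adjoint_adjoint [simp]: "adjoint_mat (adjoint_mat A) = A"
  by (simp add: adjoint_mat_def vec_eq_iff)

lemma cinner_adjoint_right: "cinner v (adjoint_mat A *v w) = cinner (A *v v) w"
  using cinner_adjoint_left[of "adjoint_mat A" v w] by simp

lemma continuous_on_cinner [continuous_intros]:
  "continuous_on S f \<Longrightarrow> continuous_on S g \<Longrightarrow> continuous_on S (\<lambda>x. cinner (f x) (g x))"
  unfolding cinner_def by (intro continuous_intros)

lemma continuous_on_matrix_vector_mult [continuous_intros]:
  "continuous_on S f \<Longrightarrow> continuous_on S (\<lambda>x. (A::complex^'n^'m) *v f x)"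
  unfolding matrix_vector_mult_def by (intro continuous_intros)

definition orthonormal :: "(nat \<Rightarrow> complex^'n) \<Rightarrow> nat \<Rightarrow> bool" where
  "orthonormal e m \<longleftrightarrow> (\<forall>j<m. \<forall>k<m. cinner (e j) (e k) = (if j = k then 1 else 0))"

lemma orthonormal_norm:
  assumes "orthonormal e m" "j < m"
  shows "norm (e j) = 1"
  using assms by (simp add: orthonormal_def flip: cinner_self_eq_1_iff)

lemma cinner_orthonormal_sum:
  assumes "orthonormal e m" "k < m"
  shows "cinner (e k) (\<Sum>j<m. c j *s e j) = c k"
proof -
  have "cinner (e k) (\<Sum>j<m. c j *s e j) = (\<Sum>j<m. c j * cinner (e k) (e j))"
    by (simp add: cinner_sum_right cinner_scale_right)
  also have "\<dots> = (\<Sum>j<m. if j = k then c j else 0)"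
    using assms by (intro sum.cong refl) (auto simp: orthonormal_def)
  finally show ?thesis using assms(2) by simp
qed

lemma cinner_orthonormal_residual:
  assumes "orthonormal e m" "k < m"
  shows "cinner (e k) (v - (\<Sum>j<m. cinner (e j) v *s e j)) = 0"
  using cinner_orthonormal_sum[OF assms] by (simp add: cinner_diff_right)

lemma orthonormal_extend:
  assumes "orthonormal e m" "norm u = 1" "\<forall>j<m. cinner (e j) u = 0"
  shows "orthonormal (e(m := u)) (Suc m)"
proof -
  have "cinner u (e j) = 0" if "j < m" for j
    using assms(3) that cinner_commute[of "e j" u] by simp
  then show ?thesis
    using assms unfolding orthonormal_def by (auto simp: less_Suc_eq cinner_self_eq_1_iff)
qed

lemma exists_unit_orthogonal_of_nonzero:
  assumes "w \<noteq> 0" "\<forall>j<k. cinner (e j) w = 0"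
  shows "\<exists>u. norm u = 1 \<and> (\<forall>j<k. cinner (e j) u = 0)"
  using assms by (intro exI[of _ "of_real (1 / norm w) *s w"])
    (simp add: norm_scale_vec norm_divide cinner_scale_right)

lemma orthonormal_card:
  fixes e :: "nat \<Rightarrow> complex^'n"
  assumes "orthonormal e m"
  shows "m \<le> CARD('n)"
proof -
  have inj: "inj_on e {..<m}"
  proof (rule inj_onI)
    fix j k assume jk: "j \<in> {..<m}" "k \<in> {..<m}" "e j = e k"
    then have "cinner (e j) (e k) = 1" using assms by (auto simp: orthonormal_def)
    then show "j = k" using assms jk(1,2) by (auto simp: orthonormal_def split: if_splits)
  qed
  have "vec.independent (e ` {..<m})"
    unfolding vec.independent_explicit
  proof (intro conjI allI impI ballI)
    show "finite (e ` {..<m})" by simp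
    fix c v assume c: "(\<Sum>v\<in>e ` {..<m}. c v *s v) = 0" and "v \<in> e ` {..<m}"
    then obtain k where k: "k < m" "v = e k" by auto
    have "(\<Sum>j<m. c (e j) *s e j) = 0" using c by (simp add: sum.reindex[OF inj])
    then have "cinner (e k) (\<Sum>j<m. c (e j) *s e j) = 0" by simp
    then show "c v = 0" using cinner_orthonormal_sum[OF assms k(1)] k(2) by simp
  qed
  then have "card (e ` {..<m}) \<le> vec.dim (UNIV :: (complex^'n) set)"
    by (rule vec.independent_card_le_dim[OF subset_UNIV])
  then show ?thesis by (simp add: card_image[OF inj] card_cart_basis)
qed

lemma orthonormal_expansion:
  fixes e :: "nat \<Rightarrow> complex^'n"
  assumes "orthonormal e CARD('n)"
  shows "v = (\<Sum>j<CARD('n). cinner (e j) v *s e j)"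
proof (rule ccontr)
  define w where "w = v - (\<Sum>j<CARD('n). cinner (e j) v *s e j)"
  assume "v \<noteq> (\<Sum>j<CARD('n). cinner (e j) v *s e j)"
  then have "w \<noteq> 0" by (simp add: w_def)
  moreover have "\<forall>j<CARD('n). cinner (e j) w = 0"
    using cinner_orthonormal_residual[OF assms] by (simp add: w_def)
  ultimately obtain u where "norm u = 1" "\<forall>j<CARD('n). cinner (e j) u = 0"
    using exists_unit_orthogonal_of_nonzero by blast
  then have "orthonormal (e(CARD('n) := u)) (Suc CARD('n))"
    by (rule orthonormal_extend[OF assms])
  then show False using orthonormal_card by fastforce
qed

lemma exists_unit_orthogonal:
  fixes e :: "nat \<Rightarrow> complex^'n"
  assumes "orthonormal e k" "k < CARD('n)"
  shows "\<exists>u. norm u = 1 \<and> (\<forall>j<k. cinner (e j) u = 0)"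
proof (rule ccontr)
  assume none: "\<not> ?thesis"
  have "x \<in> vec.span (e ` {..<k})" for x :: "complex^'n"
  proof -
    define w where "w = x - (\<Sum>j<k. cinner (e j) x *s e j)"
    have "\<forall>j<k. cinner (e j) w = 0"
      using cinner_orthonormal_residual[OF assms(1)] by (simp add: w_def)
    then have "w = 0" using none exists_unit_orthogonal_of_nonzero by blast
    then have "x = (\<Sum>j<k. cinner (e j) x *s e j)" by (simp add: w_def)
    also have "\<dots> \<in> vec.span (e ` {..<k})"
      by (intro vec.span_sum vec.span_scale vec.span_base) auto
    finally show ?thesis .
  qed
  then have "vec.dim (UNIV :: (complex^'n) set) \<le> card (e ` {..<k})"
    by (intro vec.dim_le_card) auto
  also have "\<dots> \<le> k" using card_image_le[of "{..<k}" e] by simp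
  finally show False using assms(2) by (simp add: card_cart_basis)
qed

lemma matrix_eq_on_orthonormal_basis:
  fixes A B :: "complex^'n^'n"
  assumes "orthonormal e CARD('n)" "\<forall>k<CARD('n). A *v e k = B *v e k"
  shows "A = B"
  unfolding matrix_eq
proof
  fix x :: "complex^'n"
  have "A *v x = A *v (\<Sum>j<CARD('n). cinner (e j) x *s e j)"
    using orthonormal_expansion[OF assms(1)] by metis
  also have "\<dots> = B *v (\<Sum>j<CARD('n). cinner (e j) x *s e j)"
    using assms(2) by (simp add: vec.sum vec.scale)
  also have "\<dots> = B *v x"
    using orthonormal_expansion[OF assms(1)] by metis
  finally show "A *v x = B *v x" .
qed

lemma trace_orthonormal_basis:
  fixes M :: "complex^'n^'n"
  assumes "orthonormal e CARD('n)"
  shows "trace M = (\<Sum>j<CARD('n). cinner (e j) (M *v e j))"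
proof -
  have axis: "axis i 1 = (\<Sum>j<CARD('n). cnj (e j $ i) *s e j)" for i
    using orthonormal_expansion[OF assms, of "axis i 1"] cinner_commute[of "axis i 1"]
    by (simp add: cinner_axis_left)
  have "trace M = (\<Sum>i\<in>UNIV. cinner (axis i 1) (M *v axis i 1))"
    by (simp add: trace_def cinner_axis_left matrix_vector_mult_axis)
  also have "\<dots> = (\<Sum>i\<in>UNIV. \<Sum>j<CARD('n). cnj (e j $ i) * (M *v e j) $ i)"
  proof (intro sum.cong refl)
    fix i
    have "M *v axis i 1 = (\<Sum>j<CARD('n). cnj (e j $ i) *s (M *v e j))"
      by (subst axis) (simp add: vec.sum vec.scale)
    then show "cinner (axis i 1) (M *v axis i 1) = (\<Sum>j<CARD('n). cnj (e j $ i) * (M *v e j) $ i)"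
      by (simp add: cinner_axis_left)
  qed
  also have "\<dots> = (\<Sum>j<CARD('n). cinner (e j) (M *v e j))"
    by (subst sum.swap) (simp add: cinner_def)
  finally show ?thesis .
qed

section \<open>Spectral theorem for Hermitian matrices\<close>

definition hermitian :: "complex^'n^'n \<Rightarrow> bool" where
  "hermitian A \<longleftrightarrow> adjoint_mat A = A"

lemma cinner_hermitian: "hermitian A \<Longrightarrow> cinner v (A *v w) = cinner (A *v v) w"
  using cinner_adjoint_left[of A v w] by (simp add: hermitian_def)

lemma hermitian_quadratic_real:
  assumes "hermitian A"
  shows "cinner v (A *v v) = of_real (Re (cinner v (A *v v)))"
proof -
  have "cnj (cinner v (A *v v)) = cinner v (A *v v)"
    by (simp add: cinner_commute cinner_hermitian[OF assms])
  then show ?thesis by (metis Reals_cnj_iff complex_is_Real_iff of_real_Re)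
qed

lemma positive_op_iff_cinner:
  "positive_op A \<longleftrightarrow> (\<forall>v. Im (cinner v (A *v v)) = 0 \<and> 0 \<le> Re (cinner v (A *v v)))"
  by (simp add: positive_op_def cinner_def)

lemma positive_op_hermitian:
  assumes "positive_op A"
  shows "hermitian A"
proof -
  have real: "Im (cinner v (A *v v)) = 0" for v
    using assms by (simp add: positive_op_iff_cinner)
  have polar: "cinner x (A *v y) = cnj (cinner y (A *v x))" for x y
  proof -
    define a where "a = cinner x (A *v y)"
    define b where "b = cinner y (A *v x)"
    have "cinner (x + y) (A *v (x + y)) = cinner x (A *v x) + cinner y (A *v y) + a + b"
      by (simp add: a_def b_def matrix_vector_right_distrib cinner_add_left cinner_add_right)
    then have "Im (a + b) = 0" using real[of "x + y"] real[of x] real[of y] by simp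
    moreover have "cinner (x + \<i> *s y) (A *v (x + \<i> *s y))
        = cinner x (A *v x) + cinner y (A *v y) + \<i> * a - \<i> * b"
      by (simp add: a_def b_def matrix_vector_right_distrib vec.scale cinner_add_left
          cinner_add_right cinner_scale_left cinner_scale_right algebra_simps)
    then have "Re (a - b) = 0" using real[of "x + \<i> *s y"] real[of x] real[of y] by simp
    ultimately show ?thesis by (simp add: a_def b_def complex_eq_iff)
  qed
  have "cnj (A $ j $ i) = A $ i $ j" for i j
    using polar[of "axis i 1" "axis j 1"] by (simp add: cinner_axis_left matrix_vector_mult_axis)
  then show ?thesis
    unfolding hermitian_def adjoint_mat_def by (simp add: vec_eq_iff)
qed

lemma hermitian_eigenvector_orthogonal:
  assumes "hermitian A" "A *v x = c *s x" "cinner x v = 0"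
  shows "cinner x (A *v v) = 0"
  using assms by (simp add: cinner_hermitian cinner_scale_left)

lemma linear_le_quadratic_imp_zero:
  fixes a b :: real
  assumes "\<And>t. \<bar>t\<bar> \<le> 1 \<Longrightarrow> a * t \<le> b * t\<^sup>2"
  shows "a = 0"
proof (rule ccontr)
  assume "a \<noteq> 0"
  define D where "D = \<bar>a\<bar> + \<bar>b\<bar> + 1"
  define t where "t = a / D"
  have D: "0 < D" "b < D" "\<bar>a\<bar> \<le> D" by (auto simp: D_def)
  have "\<bar>t\<bar> \<le> 1" using D by (simp add: t_def abs_divide)
  have pos: "0 < a * t"
    using \<open>a \<noteq> 0\<close> D by (auto simp: t_def zero_less_divide_iff zero_less_mult_iff)
  have "b * t\<^sup>2 = (b / D) * (a * t)" by (simp add: t_def power2_eq_square)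
  also have "\<dots> < 1 * (a * t)" using pos D by (intro mult_strict_right_mono) simp_all
  finally show False using assms[OF \<open>\<bar>t\<bar> \<le> 1\<close>] by simp
qed

lemma rayleigh_bound_subspace:
  fixes A :: "complex^'n^'n"
  assumes S: "vec.subspace S" and y: "y \<in> S"
    and max: "\<And>u. u \<in> S \<Longrightarrow> norm u = 1 \<Longrightarrow> Re (cinner u (A *v u)) \<le> \<mu>"
  shows "Re (cinner y (A *v y)) \<le> \<mu> * (norm y)\<^sup>2"
proof (cases "y = 0")
  case False
  define u where "u = of_real (1 / norm y) *s y"
  have "u \<in> S" using S y by (simp add: u_def vec.subspace_scale)
  moreover have "norm u = 1" using False by (simp add: u_def norm_scale_vec norm_divide)
  ultimately have "Re (cinner u (A *v u)) \<le> \<mu>" by (rule max)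
  moreover have "Re (cinner u (A *v u)) = Re (cinner y (A *v y)) / (norm y)\<^sup>2"
    by (simp add: u_def vec.scale cinner_scale_left cinner_scale_right power2_eq_square)
  ultimately show ?thesis using False by (simp add: field_simps)
qed simp

lemma rayleigh_maximizer_eigenvector:
  fixes A :: "complex^'n^'n"
  assumes herm: "hermitian A" and S: "vec.subspace S" and inv: "\<And>x. x \<in> S \<Longrightarrow> A *v x \<in> S"
    and v: "v \<in> S" "norm v = 1"
    and max: "\<And>u. u \<in> S \<Longrightarrow> norm u = 1 \<Longrightarrow> Re (cinner u (A *v u)) \<le> Re (cinner v (A *v v))"
  shows "A *v v = cinner v (A *v v) *s v"
proof -
  define \<mu> where "\<mu> = Re (cinner v (A *v v))"
  define w where "w = A *v v - of_real \<mu> *s v"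
  define W where "W = (norm w)\<^sup>2"
  have vAv: "cinner v (A *v v) = of_real \<mu>"
    unfolding \<mu>_def by (rule hermitian_quadratic_real[OF herm])
  have vv: "cinner v v = 1" using v(2) by (simp add: cinner_self_eq_1_iff)
  have "w \<in> S" using S inv v(1) by (simp add: w_def vec.subspace_diff vec.subspace_scale)
  have vw: "cinner v w = 0"
    by (simp add: w_def cinner_diff_right cinner_scale_right vAv vv)
  then have wv: "cinner w v = 0" using cinner_commute[of v w] by simp
  have wAv: "cinner w (A *v v) = of_real W"
  proof -
    have "A *v v = w + of_real \<mu> *s v" by (simp add: w_def)
    then show ?thesis by (simp add: cinner_add_right cinner_scale_right wv cinner_self W_def)
  qed
  have vAw: "cinner v (A *v w) = of_real W"
    using wAv cinner_commute[of w "A *v v"] by (simp add: cinner_hermitian[OF herm])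
  \<comment> \<open>Maximality of v against the perturbations v + t w, which stay in S.\<close>
  have "(2 * W) * t \<le> (\<mu> * W - Re (cinner w (A *v w))) * t\<^sup>2" for t :: real
  proof -
    define y where "y = v + of_real t *s w"
    have "y \<in> S" using S v(1) \<open>w \<in> S\<close> by (simp add: y_def vec.subspace_add vec.subspace_scale)
    then have bound: "Re (cinner y (A *v y)) \<le> \<mu> * (norm y)\<^sup>2"
      using rayleigh_bound_subspace[OF S _ max] by (simp add: \<mu>_def)
    have "cinner y (A *v y) = cinner v (A *v v) + of_real t * cinner v (A *v w)
        + of_real t * cinner w (A *v v) + of_real t * of_real t * cinner w (A *v w)"
      by (simp add: y_def matrix_vector_right_distrib vec.scale cinner_add_left cinner_add_right
          cinner_scale_left cinner_scale_right algebra_simps)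
    then have "Re (cinner y (A *v y)) = \<mu> + 2 * t * W + t\<^sup>2 * Re (cinner w (A *v w))"
      by (simp add: vAv vAw wAv power2_eq_square)
    moreover have "(norm y)\<^sup>2 = 1 + t\<^sup>2 * W"
      using norm_add_orthogonal[OF wv, of "of_real t"] v(2) by (simp add: y_def W_def)
    ultimately show ?thesis using bound by (simp add: algebra_simps)
  qed
  then have "2 * W = 0" by (rule linear_le_quadratic_imp_zero)
  then have "w = 0" by (simp add: W_def)
  then have "A *v v = of_real \<mu> *s v" by (simp add: w_def)
  then show ?thesis unfolding vAv .
qed

lemma hermitian_eigenvector_in_subspace:
  fixes A :: "complex^'n^'n"
  assumes herm: "hermitian A" and S: "vec.subspace S" "closed S"
    and inv: "\<And>x. x \<in> S \<Longrightarrow> A *v x \<in> S" and u: "u \<in> S" "norm u = 1"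
  shows "\<exists>v \<mu>. v \<in> S \<and> norm v = 1 \<and> A *v v = of_real \<mu> *s v"
proof -
  have "compact (S \<inter> sphere 0 1)" by (intro closed_Int_compact S(2) compact_sphere)
  moreover have "S \<inter> sphere 0 1 \<noteq> {}" using u by auto
  moreover have "continuous_on (S \<inter> sphere 0 1) (\<lambda>y. Re (cinner y (A *v y)))"
    by (intro continuous_intros)
  ultimately obtain v where v: "v \<in> S \<inter> sphere 0 1"
    and max: "\<forall>y \<in> S \<inter> sphere 0 1. Re (cinner y (A *v y)) \<le> Re (cinner v (A *v v))"
    using continuous_attains_sup by blast
  then have "A *v v = cinner v (A *v v) *s v"
    by (intro rayleigh_maximizer_eigenvector[OF herm S(1) inv]) auto
  then have "A *v v = of_real (Re (cinner v (A *v v))) *s v"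
    by (simp flip: hermitian_quadratic_real[OF herm])
  then show ?thesis using v by auto
qed

lemma hermitian_orthonormal_eigenvectors:
  fixes A :: "complex^'n^'n"
  assumes herm: "hermitian A"
  shows "k \<le> CARD('n) \<Longrightarrow> \<exists>e l. orthonormal e k \<and> (\<forall>j<k. A *v e j = of_real (l j) *s e j)"
proof (induction k)
  case 0
  then show ?case by (auto simp: orthonormal_def)
next
  case (Suc k)
  then obtain e l where on: "orthonormal e k" and eig: "\<forall>j<k. A *v e j = of_real (l j) *s e j"
    by auto
  define S where "S = {v. \<forall>j<k. cinner (e j) v = 0}"
  have "vec.subspace S"
    by (auto simp: S_def vec.subspace_def cinner_add_right cinner_scale_right)
  moreover have "closed S"
    unfolding S_def by (intro closed_Collect_all closed_Collect_imp closed_Collect_eq continuous_intros) auto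
  moreover have "A *v x \<in> S" if "x \<in> S" for x
    using that eig by (auto simp: S_def intro: hermitian_eigenvector_orthogonal[OF herm])
  moreover obtain u where "u \<in> S" "norm u = 1"
    using exists_unit_orthogonal[OF on] Suc.prems by (auto simp: S_def)
  ultimately obtain v \<mu> where v: "v \<in> S" "norm v = 1" "A *v v = of_real \<mu> *s v"
    using hermitian_eigenvector_in_subspace[OF herm] by blast
  have "orthonormal (e(k := v)) (Suc k)"
    using orthonormal_extend[OF on v(2)] v(1) by (simp add: S_def)
  moreover have "\<forall>j<Suc k. A *v (e(k := v)) j = of_real ((l(k := \<mu>)) j) *s (e(k := v)) j"
    using eig v(3) by (auto simp: less_Suc_eq)
  ultimately show ?case by blast
qed

corollary hermitian_spectral_theorem:
  fixes A :: "complex^'n^'n"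
  assumes "hermitian A"
  shows "\<exists>e l. orthonormal e CARD('n) \<and> (\<forall>j<CARD('n). A *v e j = of_real (l j) *s e j)"
  using hermitian_orthonormal_eigenvectors[OF assms order_refl] .

section \<open>Absolute value and trace norm\<close>

definition spectral_op :: "(nat \<Rightarrow> complex^'n) \<Rightarrow> (nat \<Rightarrow> complex) \<Rightarrow> nat \<Rightarrow> complex^'n^'n" where
  "spectral_op e d N = (\<chi> a b. \<Sum>j<N. d j * e j $ a * cnj (e j $ b))"

lemma spectral_op_mult_vec: "spectral_op e d N *v v = (\<Sum>j<N. (d j * cinner (e j) v) *s e j)"
  unfolding spectral_op_def matrix_vector_mult_def cinner_def
  by (simp add: vec_eq_iff sum_component sum_distrib_left sum_distrib_right
      sum.swap[of _ UNIV "{..<N}"] mult.commute mult.left_commute)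

lemma spectral_op_eigenvector:
  assumes "orthonormal e N" "k < N"
  shows "spectral_op e d N *v e k = d k *s e k"
proof -
  have "spectral_op e d N *v e k = (\<Sum>j<N. if j = k then d k *s e k else 0)"
    unfolding spectral_op_mult_vec using assms by (intro sum.cong refl) (auto simp: orthonormal_def)
  then show ?thesis using assms(2) by simp
qed

lemma positive_spectral_op:
  assumes "\<forall>j<N. 0 \<le> d j"
  shows "positive_op (spectral_op e (\<lambda>j. of_real (d j)) N)"
proof -
  have quad: "cinner v (spectral_op e (\<lambda>j. of_real (d j)) N *v v)
      = of_real (\<Sum>j<N. d j * (norm (cinner (e j) v))\<^sup>2)" for v
  proof -
    have "cinner v (spectral_op e (\<lambda>j. of_real (d j)) N *v v)
        = (\<Sum>j<N. of_real (d j) * (cinner (e j) v * cinner v (e j)))"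
      by (simp add: spectral_op_mult_vec cinner_sum_right cinner_scale_right mult.assoc)
    also have "\<dots> = (\<Sum>j<N. of_real (d j * (norm (cinner (e j) v))\<^sup>2))"
      by (intro sum.cong refl) (metis cinner_commute complex_norm_square of_real_mult)
    finally show ?thesis by simp
  qed
  show ?thesis
    unfolding positive_op_iff_cinner quad Re_complex_of_real Im_complex_of_real
    using assms by (auto intro!: sum_nonneg)
qed

lemma trace_spectral_op:
  assumes "orthonormal e N"
  shows "trace (spectral_op e d N) = (\<Sum>j<N. d j)"
proof -
  have "trace (spectral_op e d N) = (\<Sum>j<N. d j * cinner (e j) (e j))"
    unfolding trace_def spectral_op_def cinner_def
    by (simp add: sum.swap[of _ UNIV "{..<N}"] sum_distrib_left mult.commute mult.left_commute)
  also have "\<dots> = (\<Sum>j<N. d j)"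
    using assms by (intro sum.cong refl) (auto simp: orthonormal_def)
  finally show ?thesis .
qed

lemma positive_op_sqrt_eigenvector:
  assumes D: "positive_op D" and DDx: "D *v (D *v x) = of_real (s\<^sup>2) *s x" and s: "0 \<le> s"
  shows "D *v x = of_real s *s x"
proof (cases "s = 0")
  case True
  have "of_real ((norm (D *v x))\<^sup>2) = cinner (D *v x) (D *v x)" by (simp add: cinner_self)
  also have "\<dots> = cinner x (D *v (D *v x))"
    by (simp add: cinner_hermitian[OF positive_op_hermitian[OF D]])
  also have "\<dots> = 0" using DDx True by simp
  finally show ?thesis using True by simp
next
  case False
  define y where "y = D *v x - of_real s *s x"
  have "D *v y = of_real (- s) *s y"
    using DDx by (simp add: y_def vec.diff vec.scale vector_smult_assoc power2_eq_square algebra_simps)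
  then have "cinner y (D *v y) = of_real (- s) * cinner y y"
    by (simp only: cinner_scale_right)
  then have "Re (cinner y (D *v y)) = - s * (norm y)\<^sup>2"
    by (simp add: cinner_self)
  moreover have "0 \<le> Re (cinner y (D *v y))" using D by (simp add: positive_op_iff_cinner)
  ultimately have "(norm y)\<^sup>2 \<le> 0" using s False by (simp add: mult_le_0_iff)
  then show ?thesis by (simp add: y_def)
qed

lemma positive_op_gram: "positive_op (adjoint_mat A ** A)"
proof -
  have "cinner v ((adjoint_mat A ** A) *v v) = of_real ((norm (A *v v))\<^sup>2)" for v
    by (simp add: matrix_vector_mul_assoc[symmetric] cinner_adjoint_right cinner_self)
  then show ?thesis by (simp add: positive_op_iff_cinner)
qed

lemma positive_sqrt_spectral_op:
  fixes H :: "complex^'n^'n"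
  assumes on: "orthonormal e CARD('n)"
    and eig: "\<And>j. j < CARD('n) \<Longrightarrow> H *v e j = of_real ((s j)\<^sup>2) *s e j"
    and s: "\<And>j. 0 \<le> s j"
  shows "positive_op D \<and> D ** D = H \<longleftrightarrow> D = spectral_op e (\<lambda>j. of_real (s j)) CARD('n)"
proof -
  let ?N = "CARD('n)"
  define B where "B = spectral_op e (\<lambda>j. of_real (s j)) ?N"
  have Beig: "B *v e j = of_real (s j) *s e j" if "j < ?N" for j
    unfolding B_def by (rule spectral_op_eigenvector[OF on that])
  have "positive_op B" unfolding B_def using s by (intro positive_spectral_op) simp
  moreover have "B ** B = H"
  proof (rule matrix_eq_on_orthonormal_basis[OF on], intro allI impI)
    fix k assume k: "k < ?N"
    have "(B ** B) *v e k = of_real (s k * s k) *s e k"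
      by (simp add: matrix_vector_mul_assoc[symmetric] Beig[OF k] vec.scale vector_smult_assoc)
    also have "\<dots> = H *v e k" using eig[OF k] by (simp add: power2_eq_square)
    finally show "(B ** B) *v e k = H *v e k" .
  qed
  moreover have "D = B" if D: "positive_op D" "D ** D = H"
  proof (rule matrix_eq_on_orthonormal_basis[OF on], intro allI impI)
    fix k assume k: "k < ?N"
    have "D *v (D *v e k) = of_real ((s k)\<^sup>2) *s e k"
      using D(2) eig[OF k] by (simp add: matrix_vector_mul_assoc)
    then have "D *v e k = of_real (s k) *s e k"
      by (rule positive_op_sqrt_eigenvector[OF D(1) _ s])
    then show "D *v e k = B *v e k" using Beig[OF k] by simp
  qed
  ultimately show ?thesis unfolding B_def[symmetric] by blast
qed

lemma abs_op_spectral: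
  fixes A :: "complex^'n^'n"
  obtains e where "orthonormal e CARD('n)"
    and "abs_op A = spectral_op e (\<lambda>j. of_real (norm (A *v e j))) CARD('n)"
    and "\<And>D. positive_op D \<Longrightarrow> D ** D = adjoint_mat A ** A \<Longrightarrow> D = abs_op A"
proof -
  let ?N = "CARD('n)" and ?H = "adjoint_mat A ** A"
  obtain e l where on: "orthonormal e ?N" and eig: "\<forall>j<?N. ?H *v e j = of_real (l j) *s e j"
    using hermitian_spectral_theorem[OF positive_op_hermitian[OF positive_op_gram]] by blast
  have "?H *v e j = of_real ((norm (A *v e j))\<^sup>2) *s e j" if "j < ?N" for j
  proof -
    have "of_real (l j) = cinner (e j) (?H *v e j)"
      using eig on that by (simp add: cinner_scale_right orthonormal_def)
    also have "\<dots> = of_real ((norm (A *v e j))\<^sup>2)"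
      by (simp add: matrix_vector_mul_assoc[symmetric] cinner_adjoint_right cinner_self)
    finally show ?thesis using eig that by (simp only: of_real_eq_iff)
  qed
  from positive_sqrt_spectral_op[OF on this norm_ge_zero]
  have sqrt: "positive_op D \<and> D ** D = ?H \<longleftrightarrow>
      D = spectral_op e (\<lambda>j. of_real (norm (A *v e j))) ?N" for D .
  then have "abs_op A = spectral_op e (\<lambda>j. of_real (norm (A *v e j))) ?N"
    unfolding abs_op_def by simp
  with on sqrt show ?thesis by (intro that) auto
qed

lemma abs_op_unique:
  assumes "positive_op D" "D ** D = adjoint_mat A ** A"
  shows "abs_op A = D"
proof -
  have "\<forall>D. positive_op D \<and> D ** D = adjoint_mat A ** A \<longrightarrow> D = abs_op A"
    by (rule abs_op_spectral[of A]) blast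
  then show ?thesis using assms by simp
qed

lemma trace_norm_eq_sum_norm:
  fixes A :: "complex^'n^'n"
  obtains e where "orthonormal e CARD('n)" "trace_norm A = (\<Sum>j<CARD('n). norm (A *v e j))"
proof -
  obtain e where on: "orthonormal e CARD('n)"
    and abs: "abs_op A = spectral_op e (\<lambda>j. of_real (norm (A *v e j))) CARD('n)"
    by (rule abs_op_spectral[of A]) blast
  have "trace_norm A = Re (\<Sum>j<CARD('n). of_real (norm (A *v e j)))"
    unfolding trace_norm_def abs trace_spectral_op[OF on] ..
  then show ?thesis using that on by (simp flip: of_real_sum)
qed

lemma trace_norm_nonneg: "0 \<le> trace_norm A"
  by (rule trace_norm_eq_sum_norm[of A]) (simp add: sum_nonneg)

lemma trace_norm_eq_0D:
  fixes A :: "complex^'n^'n"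
  assumes "trace_norm A = 0"
  shows "A = 0"
proof -
  obtain e where on: "orthonormal e CARD('n)"
    and tn: "trace_norm A = (\<Sum>j<CARD('n). norm (A *v e j))"
    by (rule trace_norm_eq_sum_norm[of A])
  have "\<forall>j<CARD('n). A *v e j = 0 *v e j"
    using assms tn sum_nonneg_eq_0_iff[of "{..<CARD('n)}" "\<lambda>j. norm (A *v e j)"] by simp
  then show ?thesis by (rule matrix_eq_on_orthonormal_basis[OF on])
qed

lemma trace_norm_positive:
  assumes "positive_op P"
  shows "trace_norm P = Re (trace P)"
proof -
  have "adjoint_mat P = P" using positive_op_hermitian[OF assms] by (simp add: hermitian_def)
  then have "abs_op P = P" using abs_op_unique[of P P] assms by simp
  then show ?thesis by (simp add: trace_norm_def)
qed

lemma trace_norm_density: "density_op \<rho> \<Longrightarrow> trace_norm \<rho> = 1"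
  by (simp add: density_op_def trace_norm_positive)

section \<open>Contractions and trace duality\<close>

(* Multiplication of a matrix by a complex scalar; scaleR only allows real ones. *)
definition cscale :: "complex \<Rightarrow> complex^'n^'m \<Rightarrow> complex^'n^'m" where
  "cscale c M = (\<chi> i j. c * M $ i $ j)"

lemma cscale_mult_vec: "cscale c M *v v = c *s (M *v v)"
  by (simp add: cscale_def matrix_vector_mult_def vec_eq_iff sum_distrib_left mult.assoc)

lemma cscale_matrix_mult_left: "cscale c M ** A = cscale c (M ** A)"
  by (simp add: cscale_def matrix_matrix_mult_def vec_eq_iff sum_distrib_left mult.assoc)

lemma cscale_matrix_mult_right: "M ** cscale c A = cscale c (M ** A)"
  by (simp add: cscale_def matrix_matrix_mult_def vec_eq_iff sum_distrib_left mult.left_commute)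

lemma matrix_mult_diff_rdistrib: "((M::complex^'n^'n) - N) ** A = M ** A - N ** A"
  by (simp add: matrix_matrix_mult_def vec_eq_iff left_diff_distrib sum_subtractf)

lemma trace_cscale: "trace (cscale c M) = c * trace M"
  by (simp add: cscale_def trace_def sum_distrib_left)

lemma cscale_one [simp]: "cscale 1 M = M"
  by (simp add: cscale_def vec_eq_iff)

lemma scaleR_eq_cscale: "r *\<^sub>R (M::complex^'n^'m) = cscale (of_real r) M"
  by (simp add: cscale_def vec_eq_iff) (simp add: scaleR_conv_of_real)

lemma positive_op_scaleR: "positive_op P \<Longrightarrow> 0 \<le> r \<Longrightarrow> positive_op (r *\<^sub>R P)"
  by (simp add: positive_op_iff_cinner scaleR_eq_cscale cscale_mult_vec cinner_scale_right)

definition outer :: "complex^'n \<Rightarrow> complex^'n \<Rightarrow> complex^'n^'n" where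
  "outer x y = (\<chi> i j. x $ i * cnj (y $ j))"

lemma outer_mult_vec: "outer x y *v v = cinner y v *s x"
  by (simp add: outer_def matrix_vector_mult_def vec_eq_iff cinner_def sum_distrib_left
      mult.commute mult.left_commute)

lemma trace_outer_mult: "trace (outer x y ** A) = cinner y (A *v x)"
proof -
  have "trace (outer x y ** A) = (\<Sum>i\<in>UNIV. \<Sum>k\<in>UNIV. x $ i * cnj (y $ k) * A $ k $ i)"
    by (simp add: trace_def outer_def matrix_matrix_mult_def)
  also have "\<dots> = (\<Sum>k\<in>UNIV. \<Sum>i\<in>UNIV. x $ i * cnj (y $ k) * A $ k $ i)"
    by (rule sum.swap)
  also have "\<dots> = cinner y (A *v x)"
    by (simp add: cinner_def matrix_vector_mult_def sum_distrib_left mult.commute mult.left_commute)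
  finally show ?thesis .
qed

lemma cnj_sgn_mult_self: "cnj (sgn a) * a = of_real (norm a)"
proof (cases "a = 0")
  case False
  then show ?thesis
    by (simp add: sgn_div_norm scaleR_conv_of_real complex_norm_square[symmetric]
        power2_eq_square field_simps)
qed simp

definition contraction :: "complex^'n^'n \<Rightarrow> bool" where
  "contraction X \<longleftrightarrow> (\<forall>v. norm (X *v v) \<le> norm v)"

lemma contraction_cscale: "contraction X \<Longrightarrow> norm c \<le> 1 \<Longrightarrow> contraction (cscale c X)"
  unfolding contraction_def cscale_mult_vec norm_scale_vec
  by (metis mult_le_one norm_ge_zero order_trans mult_left_le_one_le)

lemma contraction_mat_1: "contraction (mat 1)"
  by (simp add: contraction_def)

lemma contraction_outer: "norm x \<le> 1 \<Longrightarrow> norm y \<le> 1 \<Longrightarrow> contraction (outer x y)"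
  unfolding contraction_def outer_mult_vec norm_scale_vec
proof
  fix v assume "norm x \<le> 1" "norm y \<le> 1"
  have "norm (cinner y v) * norm x \<le> norm (cinner y v)"
    using \<open>norm x \<le> 1\<close> by (simp add: mult_left_le)
  also have "\<dots> \<le> norm y * norm v" by (rule norm_cinner_le)
  also have "\<dots> \<le> norm v" using \<open>norm y \<le> 1\<close> by (simp add: mult_left_le_one_le)
  finally show "norm (cinner y v) * norm x \<le> norm v" .
qed

lemma contraction_reflection:
  fixes x :: "complex^'n"
  assumes x: "norm x = 1" and c: "norm c \<le> 1"
  shows "contraction (mat 1 - cscale (1 - c) (outer x x))"
  unfolding contraction_def
proof
  fix v :: "complex^'n"
  define p where "p = cinner x v"
  define w where "w = v - p *s x"
  have xw: "cinner x w = 0"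
    using x by (simp add: w_def p_def cinner_diff_right cinner_scale_right cinner_self)
  have "v = w + p *s x" by (simp add: w_def)
  then have "(norm v)\<^sup>2 = (norm w)\<^sup>2 + (norm p)\<^sup>2"
    using norm_add_orthogonal[OF xw] x by simp
  moreover have "(mat 1 - cscale (1 - c) (outer x x)) *v v = w + (c * p) *s x"
    by (simp add: w_def p_def matrix_vector_mult_diff_rdistrib cscale_mult_vec outer_mult_vec
        vector_smult_assoc algebra_simps)
  moreover have "(norm (w + (c * p) *s x))\<^sup>2 = (norm w)\<^sup>2 + (norm c)\<^sup>2 * (norm p)\<^sup>2"
    using norm_add_orthogonal[OF xw] x by (simp add: norm_mult power_mult_distrib)
  moreover have "(norm c)\<^sup>2 * (norm p)\<^sup>2 \<le> (norm p)\<^sup>2"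
    using c by (simp add: mult_left_le_one_le power_le_one)
  ultimately show "norm ((mat 1 - cscale (1 - c) (outer x x)) *v v) \<le> norm v"
    by (simp add: power2_le_imp_le)
qed

lemma re_trace_le_trace_norm:
  fixes A X :: "complex^'n^'n"
  assumes "contraction X"
  shows "Re (trace (X ** A)) \<le> trace_norm A"
proof -
  obtain e where on: "orthonormal e CARD('n)"
    and tn: "trace_norm A = (\<Sum>j<CARD('n). norm (A *v e j))"
    by (rule trace_norm_eq_sum_norm[of A])
  have "Re (trace (X ** A)) = (\<Sum>j<CARD('n). Re (cinner (e j) (X *v (A *v e j))))"
    by (simp add: trace_orthonormal_basis[OF on] matrix_vector_mul_assoc)
  also have "\<dots> \<le> (\<Sum>j<CARD('n). norm (e j) * norm (X *v (A *v e j)))"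
    by (intro sum_mono order_trans[OF complex_Re_le_cmod norm_cinner_le])
  also have "\<dots> \<le> (\<Sum>j<CARD('n). norm (A *v e j))"
    using assms by (intro sum_mono) (simp add: orthonormal_norm[OF on] contraction_def)
  finally show ?thesis using tn by simp
qed

lemma norm_entry_le_dual_bound:
  fixes A :: "complex^'n^'n"
  assumes "\<And>X. contraction X \<Longrightarrow> Re (trace (X ** A)) \<le> M"
  shows "norm (A $ i $ k) \<le> M"
proof -
  let ?X = "cscale (cnj (sgn (A $ i $ k))) (outer (axis k 1) (axis i 1))"
  have "contraction ?X"
    by (intro contraction_cscale contraction_outer) (simp_all add: norm_axis_complex norm_sgn)
  moreover have "trace (?X ** A) = of_real (norm (A $ i $ k))"
    by (simp add: cscale_matrix_mult_left trace_cscale trace_outer_mult cinner_axis_left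
        matrix_vector_mult_axis cnj_sgn_mult_self)
  ultimately show ?thesis using assms by fastforce
qed

lemma norm_trace_le_dual_bound:
  fixes A :: "complex^'n^'n"
  assumes "\<And>X. contraction X \<Longrightarrow> Re (trace (X ** A)) \<le> M"
  shows "norm (trace A) \<le> M"
proof -
  let ?X = "cscale (cnj (sgn (trace A))) (mat 1) :: complex^'n^'n"
  have "contraction ?X"
    by (intro contraction_cscale contraction_mat_1) (simp add: norm_sgn)
  moreover have "trace (?X ** A) = of_real (norm (trace A))"
    by (simp add: cscale_matrix_mult_left trace_cscale cnj_sgn_mult_self)
  ultimately show ?thesis using assms by fastforce
qed

corollary norm_trace_le_trace_norm: "norm (trace A) \<le> trace_norm A"
  by (rule norm_trace_le_dual_bound[OF re_trace_le_trace_norm])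

(* By trace duality this is the trace-norm unit ball. *)
definition dual_unit_ball :: "(complex^'n^'n) set" where
  "dual_unit_ball = {A. \<forall>X. contraction X \<longrightarrow> Re (trace (X ** A)) \<le> 1}"

lemma scaleR_trace_norm_in_dual_unit_ball:
  fixes u :: "complex^'n^'n"
  assumes "0 < trace_norm u"
  shows "(1 / trace_norm u) *\<^sub>R u \<in> dual_unit_ball"
  unfolding dual_unit_ball_def
proof (intro CollectI allI impI)
  fix X :: "complex^'n^'n" assume "contraction X"
  have "Re (trace (X ** ((1 / trace_norm u) *\<^sub>R u))) = Re (trace (X ** u)) / trace_norm u"
    by (simp add: scaleR_eq_cscale cscale_matrix_mult_right trace_cscale)
  also have "\<dots> \<le> 1"
    using re_trace_le_trace_norm[OF \<open>contraction X\<close>, of u] assms by simp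
  finally show "Re (trace (X ** ((1 / trace_norm u) *\<^sub>R u))) \<le> 1" .
qed

lemma cscale_in_dual_unit_ball:
  fixes A :: "complex^'n^'n"
  assumes "A \<in> dual_unit_ball" "norm c \<le> 1"
  shows "cscale c A \<in> dual_unit_ball"
  unfolding dual_unit_ball_def
proof (intro CollectI allI impI)
  fix X :: "complex^'n^'n" assume "contraction X"
  then have "contraction (cscale c X)" using assms(2) by (rule contraction_cscale)
  then have "Re (trace (cscale c X ** A)) \<le> 1" using assms(1) by (simp add: dual_unit_ball_def)
  then show "Re (trace (X ** cscale c A)) \<le> 1"
    by (simp add: cscale_matrix_mult_left cscale_matrix_mult_right)
qed

lemma norm_trace_le_1_dual_unit_ball: "A \<in> dual_unit_ball \<Longrightarrow> norm (trace A) \<le> 1"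
  by (rule norm_trace_le_dual_bound) (simp add: dual_unit_ball_def)

lemma zero_in_dual_unit_ball: "0 \<in> dual_unit_ball"
  by (simp add: dual_unit_ball_def matrix_matrix_mult_def trace_def)

lemma compact_dual_unit_ball: "compact (dual_unit_ball :: (complex^'n^'n) set)"
proof -
  have "closed {A::complex^'n^'n. Re (trace (X ** A)) \<le> 1}" for X :: "complex^'n^'n"
    unfolding trace_def matrix_matrix_mult_def
    by (intro closed_Collect_le continuous_intros)
  then have "closed (dual_unit_ball :: (complex^'n^'n) set)"
    unfolding dual_unit_ball_def Collect_all_eq Collect_imp_eq by auto
  moreover have "bounded (dual_unit_ball :: (complex^'n^'n) set)"
    unfolding bounded_iff
  proof (intro exI ballI)
    fix A :: "complex^'n^'n" assume "A \<in> dual_unit_ball"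
    then have entry: "norm (A $ i $ k) \<le> 1" for i k
      by (intro norm_entry_le_dual_bound) (simp add: dual_unit_ball_def)
    have "norm A \<le> (\<Sum>i\<in>UNIV. norm (A $ i))"
      unfolding norm_vec_def by (rule L2_set_le_sum) simp
    also have "\<dots> \<le> (\<Sum>i\<in>UNIV. \<Sum>k\<in>UNIV. norm (A $ i $ k))"
      by (intro sum_mono) (simp add: norm_vec_def L2_set_le_sum)
    also have "\<dots> \<le> (\<Sum>i\<in>(UNIV::'n set). \<Sum>k\<in>(UNIV::'n set). 1)"
      by (intro sum_mono entry)
    finally show "norm A \<le> real (CARD('n) * CARD('n))" by simp
  qed
  ultimately show ?thesis by (simp add: compact_eq_bounded_closed)
qed

lemma positive_op_dual_unit_ball_trace_1:
  fixes A :: "complex^'n^'n"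
  assumes A: "A \<in> dual_unit_ball" and tr: "trace A = 1"
  shows "positive_op A"
proof -
  have unit: "Im (cinner x (A *v x)) = 0 \<and> 0 \<le> Re (cinner x (A *v x))" if x: "norm x = 1" for x
  proof -
    define p q where "p = Re (cinner x (A *v x))" and "q = Im (cinner x (A *v x))"
    have key: "q * t \<le> p * t\<^sup>2" if "\<bar>t\<bar> \<le> 1" for t :: real
    proof -
      \<comment> \<open>Test A against the contraction mat 1 - (1 - c) x x*, where 1 - c = t^2 + i t.\<close>
      define c where "c = Complex (1 - t\<^sup>2) (- t)"
      have "t\<^sup>2 * t\<^sup>2 \<le> t\<^sup>2"
        using that by (intro mult_left_le_one_le) (simp_all add: abs_square_le_1)
      then have "norm c \<le> 1"
        by (simp add: c_def complex_norm power2_eq_square algebra_simps)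
      then have "Re (trace ((mat 1 - cscale (1 - c) (outer x x)) ** A)) \<le> 1"
        using A contraction_reflection[OF x] by (simp add: dual_unit_ball_def)
      moreover have "trace ((mat 1 - cscale (1 - c) (outer x x)) ** A)
          = 1 - (1 - c) * cinner x (A *v x)"
        using tr by (simp add: matrix_mult_diff_rdistrib trace_sub cscale_matrix_mult_left
            trace_cscale trace_outer_mult)
      ultimately show ?thesis by (simp add: c_def p_def q_def power2_eq_square mult_ac)
    qed
    have "q = 0" by (rule linear_le_quadratic_imp_zero[OF key])
    moreover have "0 \<le> p" using key[of 1] \<open>q = 0\<close> by simp
    ultimately show ?thesis by (simp add: p_def q_def)
  qed
  show ?thesis
    unfolding positive_op_iff_cinner
  proof
    fix v :: "complex^'n"
    obtain u where u: "norm u = 1" "v = of_real (norm v) *s u"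
      using unit_vector_decomposition by blast
    have "cinner v (A *v v) = of_real ((norm v)\<^sup>2) * cinner u (A *v u)"
      by (subst (1 2) u(2)) (simp add: vec.scale cinner_scale_left cinner_scale_right power2_eq_square)
    then show "Im (cinner v (A *v v)) = 0 \<and> 0 \<le> Re (cinner v (A *v v))"
      using unit[OF u(1)] by simp
  qed
qed

section \<open>Products of the dual unit ball and separability\<close>

lemma trace_tensor_op: "trace (tensor_op u v) = trace u * trace v"
proof -
  have "trace (tensor_op u v) = (\<Sum>r\<in>UNIV. u $ fst r $ fst r * v $ snd r $ snd r)"
    by (simp add: trace_def tensor_op_def)
  also have "\<dots> = (\<Sum>a\<in>UNIV. \<Sum>b\<in>UNIV. u $ a $ a * v $ b $ b)"
    unfolding sum.cartesian_product UNIV_Times_UNIV by (simp add: case_prod_beta)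
  also have "\<dots> = trace u * trace v" by (simp add: trace_def sum_product)
  finally show ?thesis .
qed

lemma tensor_op_scaleR_left: "tensor_op (r *\<^sub>R u) v = r *\<^sub>R tensor_op u v"
  by (simp add: tensor_op_def scaleR_eq_cscale cscale_def vec_eq_iff mult.assoc)

lemma tensor_op_scaleR_right: "tensor_op u (r *\<^sub>R v) = r *\<^sub>R tensor_op u v"
  by (simp add: tensor_op_def scaleR_eq_cscale cscale_def vec_eq_iff mult.left_commute)

lemma tensor_op_cscale: "tensor_op (cscale a u) (cscale b v) = cscale (a * b) (tensor_op u v)"
  by (simp add: tensor_op_def cscale_def vec_eq_iff mult_ac)

lemma tensor_op_zero_left [simp]: "tensor_op 0 v = 0"
  by (simp add: tensor_op_def vec_eq_iff)

lemma tensor_op_zero_right [simp]: "tensor_op u 0 = 0"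
  by (simp add: tensor_op_def vec_eq_iff)

lemma continuous_on_tensor_op:
  "continuous_on UNIV (\<lambda>p::(complex^'a^'a) \<times> (complex^'b^'b). tensor_op (fst p) (snd p))"
  unfolding tensor_op_def by (intro continuous_intros)

lemma trace_sum: "trace (\<Sum>i\<in>I. M i :: complex^'n^'n) = (\<Sum>i\<in>I. trace (M i))"
proof (induction I rule: infinite_finite_induct)
  case (insert x F)
  then show ?case by (simp add: trace_add)
qed (simp_all add: trace_def)

lemma trace_scaleR: "trace (r *\<^sub>R (M::complex^'n^'n)) = of_real r * trace M"
  by (simp add: scaleR_eq_cscale trace_cscale)

definition product_ball :: "(complex^('a::finite \<times> 'b::finite)^('a \<times> 'b)) set" where
  "product_ball = (\<lambda>(u, v). tensor_op u v) ` (dual_unit_ball \<times> dual_unit_ball)"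

lemma compact_convex_hull_product_ball: "compact (convex hull product_ball)"
  unfolding product_ball_def case_prod_beta
  by (intro compact_convex_hull compact_continuous_image continuous_on_subset[OF continuous_on_tensor_op]
      compact_Times compact_dual_unit_ball) auto

lemma zero_in_product_ball: "0 \<in> product_ball"
  unfolding product_ball_def by (rule image_eqI[where x = "(0, 0)"]) (auto simp: zero_in_dual_unit_ball)

lemma tensor_op_scaled_product_ball:
  "\<exists>t \<in> product_ball. tensor_op u v = (trace_norm u * trace_norm v) *\<^sub>R t"
proof (cases "0 < trace_norm u \<and> 0 < trace_norm v")
  case True
  let ?u = "(1 / trace_norm u) *\<^sub>R u" and ?v = "(1 / trace_norm v) *\<^sub>R v"
  have "tensor_op ?u ?v \<in> product_ball"
    unfolding product_ball_def using True
    by (intro image_eqI[where x = "(?u, ?v)"]) (auto intro: scaleR_trace_norm_in_dual_unit_ball)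
  moreover have "tensor_op u v = (trace_norm u * trace_norm v) *\<^sub>R tensor_op ?u ?v"
    using True by (simp add: tensor_op_scaleR_left tensor_op_scaleR_right)
  ultimately show ?thesis by blast
next
  case False
  then have "u = 0 \<or> v = 0"
    using trace_norm_nonneg[of u] trace_norm_nonneg[of v] trace_norm_eq_0D
    by (metis less_eq_real_def)
  then show ?thesis using zero_in_product_ball by auto
qed

lemma convex_subcombination_with_zero:
  fixes t :: "nat \<Rightarrow> 'a::real_vector"
  assumes "convex S" "0 \<in> S" "\<And>i. i < n \<Longrightarrow> t i \<in> S"
    and "\<And>i. i < n \<Longrightarrow> 0 \<le> c i" "(\<Sum>i<n. c i) \<le> 1"
  shows "(\<Sum>i<n. c i *\<^sub>R t i) \<in> S"
proof -
  define c' where "c' i = (if i < n then c i else 1 - (\<Sum>j<n. c j))" for i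
  define t' where "t' i = (if i < n then t i else 0)" for i
  have "(\<Sum>i<Suc n. c' i *\<^sub>R t' i) \<in> S"
    using assms by (intro convex_sum) (auto simp: c'_def t'_def)
  then show ?thesis by (simp add: c'_def t'_def)
qed

lemma decomposition_scaled_in_convex_hull:
  fixes n :: nat
  assumes \<sigma>: "\<sigma> = (\<Sum>i<n. tensor_op (u i) (v i))" and s: "0 < s"
    and cost: "(\<Sum>i<n. trace_norm (u i) * trace_norm (v i)) \<le> s"
  shows "(1 / s) *\<^sub>R \<sigma> \<in> convex hull product_ball"
proof -
  define a where "a i = trace_norm (u i) * trace_norm (v i)" for i
  have "\<forall>i. \<exists>t. t \<in> product_ball \<and> tensor_op (u i) (v i) = a i *\<^sub>R t"
    using tensor_op_scaled_product_ball unfolding a_def by blast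
  from choice[OF this] obtain t
    where t: "\<forall>i. t i \<in> product_ball \<and> tensor_op (u i) (v i) = a i *\<^sub>R t i"
    by blast
  have "(1 / s) *\<^sub>R \<sigma> = (\<Sum>i<n. (a i / s) *\<^sub>R t i)"
    using t by (simp add: \<sigma> scaleR_sum_right)
  also have "\<dots> \<in> convex hull product_ball"
  proof (rule convex_subcombination_with_zero)
    show "0 \<in> convex hull product_ball"
      by (rule hull_inc[OF zero_in_product_ball])
    have "(\<Sum>i<n. a i / s) = (\<Sum>i<n. a i) / s" by (rule sum_divide_distrib[symmetric])
    then show "(\<Sum>i<n. a i / s) \<le> 1"
      using cost s by (simp add: a_def)
    show "t i \<in> convex hull product_ball" for i
      using t by (simp add: hull_inc)
    show "0 \<le> a i / s" for i
      using s by (simp add: a_def trace_norm_nonneg)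
  qed (rule convex_convex_hull)
  finally show ?thesis .
qed

lemma separable_sum:
  fixes \<rho>1 :: "'c \<Rightarrow> complex^'a::finite^'a" and \<rho>2 :: "'c \<Rightarrow> complex^'b::finite^'b"
  assumes "finite S" and "\<And>x. x \<in> S \<Longrightarrow> 0 < c x \<and> density_op (\<rho>1 x) \<and> density_op (\<rho>2 x)"
  shows "separable (\<Sum>x\<in>S. c x *\<^sub>R tensor_op (\<rho>1 x) (\<rho>2 x))"
proof -
  obtain h where h: "bij_betw h {0..<card S} S"
    using ex_bij_betw_nat_finite[OF assms(1)] by blast
  have "(\<Sum>x\<in>S. c x *\<^sub>R tensor_op (\<rho>1 x) (\<rho>2 x))
      = (\<Sum>i<card S. c (h i) *\<^sub>R tensor_op (\<rho>1 (h i)) (\<rho>2 (h i)))"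
    using sum.reindex_bij_betw[OF h, of "\<lambda>x. c x *\<^sub>R tensor_op (\<rho>1 x) (\<rho>2 x)"]
    by (simp add: lessThan_atLeast0)
  moreover have "h i \<in> S" if "i < card S" for i
    using h that by (auto simp: bij_betw_def)
  then have "\<forall>i<card S. 0 < c (h i) \<and> density_op (\<rho>1 (h i)) \<and> density_op (\<rho>2 (h i))"
    using assms(2) by blast
  ultimately show ?thesis
    unfolding separable_def
    by (intro exI[of _ "card S"] exI[of _ "\<lambda>i. c (h i)"] exI[of _ "\<lambda>i. \<rho>1 (h i)"]
        exI[of _ "\<lambda>i. \<rho>2 (h i)"]) simp
qed

lemma convex_combination_eq_1_unit_disc:
  fixes z :: "'c \<Rightarrow> complex"
  assumes S: "finite S" "\<And>x. x \<in> S \<Longrightarrow> 0 < c x" "sum c S = 1"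
    and z: "\<And>x. x \<in> S \<Longrightarrow> norm (z x) \<le> 1" "(\<Sum>x\<in>S. of_real (c x) * z x) = 1"
    and x: "x \<in> S"
  shows "z x = 1"
proof -
  have "Re (\<Sum>x\<in>S. of_real (c x) * z x) = (\<Sum>x\<in>S. c x * Re (z x))"
    by (simp add: Re_sum)
  then have "(\<Sum>x\<in>S. c x * (1 - Re (z x))) = 0"
    using z(2) S(3) by (simp add: right_diff_distrib sum_subtractf)
  moreover have nonneg: "0 \<le> c y * (1 - Re (z y))" if "y \<in> S" for y
  proof -
    have "Re (z y) \<le> 1" using complex_Re_le_cmod[of "z y"] z(1)[OF that] by linarith
    then show ?thesis using S(2)[OF that] by simp
  qed
  ultimately have "\<forall>y\<in>S. c y * (1 - Re (z y)) = 0"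
    using sum_nonneg_eq_0_iff[OF S(1) nonneg] by simp
  then have re: "Re (z x) = 1" using S(2)[OF x] x by fastforce
  have "(Re (z x))\<^sup>2 + (Im (z x))\<^sup>2 \<le> 1"
    using z(1)[OF x] by (simp add: cmod_def)
  then have "Im (z x) = 0" using re by simp
  then show ?thesis using re by (simp add: complex_eq_iff)
qed

lemma density_op_normalize:
  assumes "A \<in> dual_unit_ball" "norm (trace A) = 1"
  shows "density_op (cscale (cnj (trace A)) A)"
proof -
  have "cscale (cnj (trace A)) A \<in> dual_unit_ball"
    using assms by (intro cscale_in_dual_unit_ball) simp_all
  moreover have "trace (cscale (cnj (trace A)) A) = 1"
    using assms(2) by (simp add: trace_cscale cnj_mult_self)
  ultimately show ?thesis
    by (simp add: density_op_def positive_op_dual_unit_ball_trace_1)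
qed

lemma norm_trace_le_1_product_ball:
  assumes "x \<in> product_ball"
  shows "norm (trace x) \<le> 1"
proof -
  obtain u v where "u \<in> dual_unit_ball" "v \<in> dual_unit_ball" "x = tensor_op u v"
    using assms by (auto simp: product_ball_def)
  then show ?thesis
    by (simp add: trace_tensor_op norm_mult mult_le_one norm_trace_le_1_dual_unit_ball)
qed

lemma product_ball_trace_1_product_state:
  assumes "x \<in> product_ball" "trace x = 1"
  shows "\<exists>\<rho>1 \<rho>2. density_op \<rho>1 \<and> density_op \<rho>2 \<and> tensor_op \<rho>1 \<rho>2 = x"
proof -
  obtain u v where uv: "u \<in> dual_unit_ball" "v \<in> dual_unit_ball" "x = tensor_op u v"
    using assms(1) by (auto simp: product_ball_def)
  have tr: "trace u * trace v = 1" using assms(2) uv(3) by (simp add: trace_tensor_op)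
  have le: "norm (trace u) \<le> 1" "norm (trace v) \<le> 1"
    using uv norm_trace_le_1_dual_unit_ball by blast+
  have prod: "norm (trace u) * norm (trace v) = 1"
    using arg_cong[OF tr, of norm] by (simp add: norm_mult)
  have "1 \<le> norm (trace u)"
    using mult_left_le[OF le(2), of "norm (trace u)"] prod by simp
  moreover have "1 \<le> norm (trace v)"
    using mult_right_le_one_le[OF _ _ le(1), of "norm (trace v)"] prod by (simp add: mult.commute)
  ultimately have norm1: "norm (trace u) = 1" "norm (trace v) = 1" using le by simp_all
  have "cnj (trace u) * cnj (trace v) = 1" using arg_cong[OF tr, of cnj] by simp
  then have "tensor_op (cscale (cnj (trace u)) u) (cscale (cnj (trace v)) v) = x"
    by (simp add: uv(3) tensor_op_cscale)
  moreover have "density_op (cscale (cnj (trace u)) u)" "density_op (cscale (cnj (trace v)) v)"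
    using density_op_normalize uv(1,2) norm1 by blast+
  ultimately show ?thesis by blast
qed

lemma convex_hull_positive_weights:
  assumes "x \<in> convex hull P"
  obtains S c where "finite S" "S \<subseteq> P" "\<And>y. y \<in> S \<Longrightarrow> 0 < c y" "sum c S = 1"
    "(\<Sum>y\<in>S. c y *\<^sub>R y) = x"
proof -
  obtain S c where S: "finite S" "S \<subseteq> P" "\<forall>y\<in>S. 0 \<le> c y" "sum c S = 1"
    and x: "(\<Sum>y\<in>S. c y *\<^sub>R y) = x"
    using assms unfolding convex_hull_explicit by blast
  define S' where "S' = {y \<in> S. 0 < c y}"
  have S': "finite S'" "S' \<subseteq> S" "\<forall>y\<in>S - S'. c y = 0"
    using S by (auto simp: S'_def)
  show ?thesis
  proof (rule that[OF S'(1)])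
    show "S' \<subseteq> P" using S(2) S'(2) by blast
    show "0 < c y" if "y \<in> S'" for y using that by (simp add: S'_def)
    show "sum c S' = 1"
      using sum.mono_neutral_left[OF S(1) S'(2), of c] S'(3) S(4) by simp
    show "(\<Sum>y\<in>S'. c y *\<^sub>R y) = x"
      using sum.mono_neutral_left[OF S(1) S'(2), of "\<lambda>y. c y *\<^sub>R y"] S'(3) x by simp
  qed
qed

lemma separable_if_in_convex_hull_product_ball:
  fixes \<sigma> :: "complex^('a::finite \<times> 'b::finite)^('a \<times> 'b)"
  assumes "\<sigma> \<in> convex hull product_ball" "trace \<sigma> = 1"
  shows "separable \<sigma>"
proof -
  obtain S c where S: "finite S" "S \<subseteq> product_ball" "\<And>x. x \<in> S \<Longrightarrow> 0 < c x"
    and c1: "sum c S = 1" and \<sigma>: "(\<Sum>x\<in>S. c x *\<^sub>R x) = \<sigma>"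
    using convex_hull_positive_weights[OF assms(1)] by blast
  have tr1: "trace x = 1" if "x \<in> S" for x
  proof (rule convex_combination_eq_1_unit_disc[OF S(1,3) c1 _ _ that])
    show "norm (trace y) \<le> 1" if "y \<in> S" for y
      using that S(2) norm_trace_le_1_product_ball by blast
    show "(\<Sum>x\<in>S. of_real (c x) * trace x) = 1"
      using assms(2) unfolding \<sigma>[symmetric] by (simp add: trace_sum trace_scaleR)
  qed
  have "\<forall>x\<in>S. \<exists>p. density_op (fst p) \<and> density_op (snd p) \<and> tensor_op (fst p) (snd p) = x"
  proof (intro ballI)
    fix x assume x: "x \<in> S"
    then obtain \<rho>1 \<rho>2 where "density_op \<rho>1" "density_op \<rho>2" "tensor_op \<rho>1 \<rho>2 = x"
      using product_ball_trace_1_product_state S(2) tr1 by blast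
    then show "\<exists>p. density_op (fst p) \<and> density_op (snd p) \<and> tensor_op (fst p) (snd p) = x"
      by (intro exI[of _ "(\<rho>1, \<rho>2)"]) simp
  qed
  from bchoice[OF this] obtain R where R: "\<forall>x\<in>S. density_op (fst (R x))
      \<and> density_op (snd (R x)) \<and> tensor_op (fst (R x)) (snd (R x)) = x"
    by blast
  have "\<sigma> = (\<Sum>x\<in>S. c x *\<^sub>R tensor_op (fst (R x)) (snd (R x)))"
    unfolding \<sigma>[symmetric] using R by (intro sum.cong refl) simp
  moreover have "separable (\<Sum>x\<in>S. c x *\<^sub>R tensor_op (fst (R x)) (snd (R x)))"
    by (rule separable_sum[OF S(1)]) (use R S(3) in simp)
  ultimately show ?thesis by simp
qed

section \<open>The greatest cross norm\<close>

definition decomposition_costs :: "complex^('a::finite \<times> 'b::finite)^('a \<times> 'b) \<Rightarrow> real set" where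
  "decomposition_costs t = {(\<Sum>i<n. trace_norm (u i) * trace_norm (v i)) | (n::nat)
      (u::nat \<Rightarrow> complex^'a^'a) (v::nat \<Rightarrow> complex^'b^'b). t = (\<Sum>i<n. tensor_op (u i) (v i))}"

lemma gamma_norm_eq_Inf: "gamma_norm t = Inf (decomposition_costs t)"
  by (simp add: gamma_norm_def decomposition_costs_def)

lemma decomposition_costs_nonempty:
  fixes t :: "complex^('a::finite \<times> 'b::finite)^('a \<times> 'b)"
  shows "decomposition_costs t \<noteq> {}"
proof -
  define U where "U p = (\<chi> i j. if i = fst (fst p) \<and> j = fst (snd p) then t $ fst p $ snd p else 0)"
    for p :: "('a \<times> 'b) \<times> ('a \<times> 'b)"
  define V where "V p = (\<chi> i j. if i = snd (fst p) \<and> j = snd (snd p) then 1 else (0::complex))"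
    for p :: "('a \<times> 'b) \<times> ('a \<times> 'b)"
  have "t $ R $ C = (\<Sum>p\<in>UNIV. tensor_op (U p) (V p)) $ R $ C" for R C
  proof -
    have "(\<Sum>p\<in>UNIV. tensor_op (U p) (V p)) $ R $ C = (\<Sum>p\<in>UNIV. if p = (R, C) then t $ R $ C else 0)"
      unfolding sum_component
      by (intro sum.cong refl) (auto simp: tensor_op_def U_def V_def prod_eq_iff)
    then show ?thesis by simp
  qed
  then have t: "t = (\<Sum>p\<in>UNIV. tensor_op (U p) (V p))" by (simp add: vec_eq_iff)
  obtain h :: "nat \<Rightarrow> ('a \<times> 'b) \<times> ('a \<times> 'b)"
    where h: "bij_betw h {0..<CARD(('a \<times> 'b) \<times> ('a \<times> 'b))} UNIV"
    using ex_bij_betw_nat_finite[of "UNIV :: (('a \<times> 'b) \<times> ('a \<times> 'b)) set"] by auto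
  have "t = (\<Sum>i<CARD(('a \<times> 'b) \<times> ('a \<times> 'b)). tensor_op (U (h i)) (V (h i)))"
    unfolding t lessThan_atLeast0 by (rule sum.reindex_bij_betw[OF h, symmetric])
  then have "(\<Sum>i<CARD(('a \<times> 'b) \<times> ('a \<times> 'b)). trace_norm (U (h i)) * trace_norm (V (h i)))
      \<in> decomposition_costs t"
    unfolding decomposition_costs_def mem_Collect_eq
    by (intro exI[of _ "CARD(('a \<times> 'b) \<times> ('a \<times> 'b))"] exI[of _ "\<lambda>i. U (h i)"]
        exI[of _ "\<lambda>i. V (h i)"] conjI refl)
  then show ?thesis by blast
qed

lemma norm_trace_le_decomposition_cost:
  assumes "g \<in> decomposition_costs t"
  shows "norm (trace t) \<le> g"
proof -
  obtain n u v where g: "g = (\<Sum>i<(n::nat). trace_norm (u i) * trace_norm (v i))"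
    and t: "t = (\<Sum>i<n. tensor_op (u i) (v i))"
    using assms unfolding decomposition_costs_def by blast
  have "norm (trace t) = norm (\<Sum>i<n. trace (u i) * trace (v i))"
    by (simp add: t trace_sum trace_tensor_op)
  also have "\<dots> \<le> (\<Sum>i<n. norm (trace (u i)) * norm (trace (v i)))"
    by (rule order_trans[OF norm_sum]) (simp add: norm_mult)
  also have "\<dots> \<le> g"
    unfolding g
    by (intro sum_mono mult_mono norm_trace_le_trace_norm trace_norm_nonneg norm_ge_zero)
  finally show ?thesis .
qed

lemma bdd_below_decomposition_costs: "bdd_below (decomposition_costs t)"
  using norm_trace_le_decomposition_cost unfolding bdd_below_def by blast

lemma norm_trace_le_gamma_norm: "norm (trace t) \<le> gamma_norm t"
  unfolding gamma_norm_eq_Inf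
  by (intro cInf_greatest decomposition_costs_nonempty norm_trace_le_decomposition_cost)

lemma one_in_decomposition_costs:
  assumes "separable \<sigma>" "trace \<sigma> = 1"
  shows "1 \<in> decomposition_costs \<sigma>"
proof -
  obtain n \<omega> \<rho>1 \<rho>2 where dens: "\<forall>i<(n::nat). \<omega> i > 0 \<and> density_op (\<rho>1 i) \<and> density_op (\<rho>2 i)"
    and \<sigma>: "\<sigma> = (\<Sum>i<n. \<omega> i *\<^sub>R tensor_op (\<rho>1 i) (\<rho>2 i))"
    using assms(1) unfolding separable_def by blast
  have "complex_of_real (\<Sum>i<n. \<omega> i) = trace \<sigma>"
    using dens by (simp add: \<sigma> trace_sum trace_scaleR trace_tensor_op density_op_def)
  then have "(\<Sum>i<n. \<omega> i) = 1" using assms(2) by (simp only: of_real_eq_1_iff)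
  moreover have "trace_norm (\<omega> i *\<^sub>R \<rho>1 i) * trace_norm (\<rho>2 i) = \<omega> i" if "i < n" for i
  proof -
    have "positive_op (\<rho>1 i)" "trace (\<rho>1 i) = 1" "0 \<le> \<omega> i" "density_op (\<rho>2 i)"
      using dens that by (auto simp: density_op_def)
    then show ?thesis
      by (simp add: trace_norm_positive positive_op_scaleR trace_scaleR trace_norm_density)
  qed
  then have "(\<Sum>i<n. trace_norm (\<omega> i *\<^sub>R \<rho>1 i) * trace_norm (\<rho>2 i)) = (\<Sum>i<n. \<omega> i)"
    by simp
  moreover have "\<sigma> = (\<Sum>i<n. tensor_op (\<omega> i *\<^sub>R \<rho>1 i) (\<rho>2 i))"
    by (simp add: \<sigma> tensor_op_scaleR_left)
  ultimately show ?thesis unfolding decomposition_costs_def by force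
qed

lemma scaleR_inverse_gamma_norm_in_convex_hull:
  assumes "0 < gamma_norm t"
  shows "(1 / gamma_norm t) *\<^sub>R t \<in> convex hull product_ball"
proof -
  define s where "s m = gamma_norm t + inverse (real (Suc m))" for m
  have "(1 / s m) *\<^sub>R t \<in> convex hull product_ball" for m
  proof -
    have "Inf (decomposition_costs t) < s m" by (simp add: gamma_norm_eq_Inf[symmetric] s_def)
    then obtain g where "g \<in> decomposition_costs t" "g < s m"
      using cInf_less_iff[OF decomposition_costs_nonempty bdd_below_decomposition_costs] by blast
    then obtain n u v where "g = (\<Sum>i<(n::nat). trace_norm (u i) * trace_norm (v i))"
      and "t = (\<Sum>i<n. tensor_op (u i) (v i))"
      unfolding decomposition_costs_def by blast
    moreover have "0 < s m" using assms by (simp add: s_def add_pos_pos)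
    ultimately show ?thesis
      using \<open>g < s m\<close> by (intro decomposition_scaled_in_convex_hull) auto
  qed
  moreover have "(\<lambda>m. (1 / s m) *\<^sub>R t) \<longlonglongrightarrow> (1 / gamma_norm t) *\<^sub>R t"
    unfolding s_def using assms
    by (intro tendsto_scaleR tendsto_divide tendsto_const LIMSEQ_inverse_real_of_nat_add) simp
  ultimately show ?thesis
    by (rule closed_sequentially[OF compact_imp_closed[OF compact_convex_hull_product_ball]])
qed

theorem gamma_norm_eq_1_iff_separable:
  assumes "trace \<sigma> = 1"
  shows "gamma_norm \<sigma> = 1 \<longleftrightarrow> separable \<sigma>"
proof
  assume "gamma_norm \<sigma> = 1"
  then have "\<sigma> \<in> convex hull product_ball"
    using scaleR_inverse_gamma_norm_in_convex_hull[of \<sigma>] by simp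
  then show "separable \<sigma>"
    using assms by (rule separable_if_in_convex_hull_product_ball)
next
  assume "separable \<sigma>"
  then have "gamma_norm \<sigma> \<le> 1"
    unfolding gamma_norm_eq_Inf
    by (intro cInf_lower bdd_below_decomposition_costs one_in_decomposition_costs assms)
  moreover have "1 \<le> gamma_norm \<sigma>"
    using norm_trace_le_gamma_norm[of \<sigma>] assms by simp
  ultimately show "gamma_norm \<sigma> = 1" by simp
qed

theorem corollary9:
  fixes f :: "real \<Rightarrow> real"
    and \<sigma> :: "complex^('a::finite \<times> 'b::finite)^('a \<times> 'b)"
  assumes "convex_on {1..} f"
    and "strict_mono_on {1..} f"
    and "f 1 = 0"
    and "density_op \<sigma>"
  shows "f (gamma_norm \<sigma>) = 0 \<longleftrightarrow> separable \<sigma>"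
proof -
  have tr: "trace \<sigma> = 1" using assms(4) by (simp add: density_op_def)
  then have "1 \<le> gamma_norm \<sigma>" using norm_trace_le_gamma_norm[of \<sigma>] by simp
  then have "f (gamma_norm \<sigma>) = f 1 \<longleftrightarrow> gamma_norm \<sigma> = 1"
    using strict_mono_on_eq[OF assms(2)] by simp
  then show ?thesis using assms(3) gamma_norm_eq_1_iff_separable[OF tr] by simp
qed

end
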